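(* Every subquotient (in the category of $\mathcal{D}_{\mathbb{A}^n_{\mathbb{C}}}$-modules) of a linear module on $\mathbb{A}^n_{\mathbb{C}}$ is a linear module.
   Context: All $\mathcal{D}$-modules are algebraic. For a finite-dimensional $\mathbb{C}$-vector space $E$ and a linear form $\varphi:E\to\mathbb{C}$, let $\mathcal{E}^{\varphi}$ denote the $\mathcal{D}_E$-module $(\mathcal{O}_E, d+d\varphi)$. A \emph{linear module on $E$} is a $\mathcal{D}_E$-module isomorphic to a finite direct sum of modules of the form $\mathcal{E}^{\varphi}$ with $\varphi$ linear forms on $E$. *)

theory Defs
  imports Complex_Main
begin

text \<open>Polynomials in C[x_0,...,x_{n-1}] represented by their coefficient functions on
exponent vectors (nat => nat), finitely supported, and only involving variables i < n.\<close>

type_synonym cpoly = "(nat \<Rightarrow> nat) \<Rightarrow> complex"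

definition polys :: "nat \<Rightarrow> cpoly set" where
  "polys n = {p. finite {a. p a \<noteq> 0} \<and> (\<forall>a. p a \<noteq> 0 \<longrightarrow> (\<forall>i\<ge>n. a i = 0))}"

definition mulX :: "nat \<Rightarrow> cpoly \<Rightarrow> cpoly" where
  "mulX i p = (\<lambda>a. if a i = 0 then 0 else p (a(i := a i - 1)))"

definition pderivX :: "nat \<Rightarrow> cpoly \<Rightarrow> cpoly" where
  "pderivX i p = (\<lambda>a. of_nat (a i + 1) * p (a(i := a i + 1)))"

text \<open>Action of d/dx_i on E^phi = (O_E, d + d phi), where phi = sum_i phi_i x_i:
  p |-> d_i p + phi_i p.\<close>
definition twD :: "(nat \<Rightarrow> complex) \<Rightarrow> nat \<Rightarrow> cpoly \<Rightarrow> cpoly" where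
  "twD phi i p = (\<lambda>a. pderivX i p a + phi i * p a)"

text \<open>The linear module E^{phi_0} + ... + E^{phi_{m-1}} on A^n (phis = [phi_0,...]).
  Elements: families indexed by k < m, zero outside.\<close>
type_synonym lelem = "nat \<Rightarrow> cpoly"

definition lin_carrier :: "nat \<Rightarrow> (nat \<Rightarrow> complex) list \<Rightarrow> lelem set" where
  "lin_carrier n phis = {v. (\<forall>k < length phis. v k \<in> polys n) \<and>
                             (\<forall>k \<ge> length phis. v k = (\<lambda>_. 0))}"

definition lin_zero :: lelem where "lin_zero = (\<lambda>k a. 0)"

definition lin_add :: "lelem \<Rightarrow> lelem \<Rightarrow> lelem" where
  "lin_add v w = (\<lambda>k a. v k a + w k a)"

definition lin_scale :: "complex \<Rightarrow> lelem \<Rightarrow> lelem" where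
  "lin_scale c v = (\<lambda>k a. c * v k a)"

definition lin_X :: "nat \<Rightarrow> lelem \<Rightarrow> lelem" where
  "lin_X i v = (\<lambda>k. mulX i (v k))"

definition lin_D :: "(nat \<Rightarrow> complex) list \<Rightarrow> nat \<Rightarrow> lelem \<Rightarrow> lelem" where
  "lin_D phis i v = (\<lambda>k. if k < length phis then twD (phis ! k) i (v k) else v k)"

text \<open>Sub-D-modules (D = Weyl algebra generated by x_i, d_i, i < n) of the linear module.\<close>
definition is_Dsub :: "nat \<Rightarrow> (nat \<Rightarrow> complex) list \<Rightarrow> lelem set \<Rightarrow> bool" where
  "is_Dsub n phis N \<longleftrightarrow> N \<subseteq> lin_carrier n phis \<and> lin_zero \<in> N \<and>
     (\<forall>v\<in>N. \<forall>w\<in>N. lin_add v w \<in> N) \<and>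
     (\<forall>c. \<forall>v\<in>N. lin_scale c v \<in> N) \<and>
     (\<forall>i<n. \<forall>v\<in>N. lin_X i v \<in> N \<and> lin_D phis i v \<in> N)"

end

theory Submission
  imports Defs "HOL-Library.Function_Algebras"
begin

(*
  Every sub-D-module N of the linear module M = E^phi_0 + ... + E^phi_(m-1) on A^n is
  determined by its space of constant sections W(N) = {w in C^m. the constant family w lies in N}:
  an element v of M lies in N iff every coefficient vector of v (the vector of the
  coefficients of x^a in the m components) lies in W(N).  The inclusion "if" holds because N
  is stable under multiplication by the x_i; the inclusion "only if" follows by applying
  suitable operators d_i - c to v, which kill all components except those carrying one label
  phi|_n and extract the top-degree coefficient.  The same operators show that W(N) is spanned
  by "pure" vectors, i.e. vectors supported on components with one common label.

  For N2 <= N1 this reduces the theorem to linear algebra: choose a basis of W(N2) made of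
  pure vectors, extend it to such a basis of W(N1), and let L send the new basis vectors to the
  standard basis of C^d, labelling coordinate j by the label of the j-th new basis vector.
  Applying L coefficientwise maps N1 onto the linear module with these labels, with kernel N2,
  and intertwines the actions of x_i and d_i.
*)

definition deg :: "nat \<Rightarrow> (nat \<Rightarrow> nat) \<Rightarrow> nat" where
  "deg n b = (\<Sum>i<n. b i)"

definition deg_below :: "nat \<Rightarrow> nat \<Rightarrow> cpoly \<Rightarrow> bool" where
  "deg_below n e p \<longleftrightarrow> (\<forall>b. p b \<noteq> 0 \<longrightarrow> deg n b < e)"

lemma deg_incr: "i < n \<Longrightarrow> deg n (b(i := Suc (b i))) = Suc (deg n b)"
proof -
  assume i: "i < n"
  have "deg n (b(i := Suc (b i))) = (\<Sum>j<n. b j + (if j = i then 1 else 0))"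
    unfolding deg_def by (rule sum.cong) auto
  also have "\<dots> = deg n b + 1" using i by (simp add: sum.distrib deg_def)
  finally show ?thesis by simp
qed

lemma deg_add: "deg n (\<lambda>j. b j + c j) = deg n b + deg n c"
  unfolding deg_def by (simp add: sum.distrib)

lemma deg_pos: "j < n \<Longrightarrow> b j \<noteq> 0 \<Longrightarrow> deg n b > 0"
  unfolding deg_def by (metis bot_nat_0.not_eq_extremum finite_lessThan lessThan_iff sum_pos2 zero_le)

lemma deg_zero: "deg n a = 0 \<Longrightarrow> \<forall>i\<ge>n. a i = 0 \<Longrightarrow> a = (\<lambda>_. 0)"
proof
  fix i assume d: "deg n a = 0" and z: "\<forall>i\<ge>n. a i = 0"
  show "a i = 0"
  proof (cases "i < n")
    case True then show ?thesis using d unfolding deg_def by simp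
  qed (use z in auto)
qed

lemma deg_below_mono: "deg_below n e p \<Longrightarrow> e \<le> e' \<Longrightarrow> deg_below n e' p"
  unfolding deg_below_def by fastforce

section \<open>The operators d_i - c on a rank-one module E^phi\<close>

lemma pderivX_nonzero: "pderivX i p b \<noteq> 0 \<Longrightarrow> p (b(i := Suc (b i))) \<noteq> 0"
  unfolding pderivX_def by auto

lemma pderivX_polys:
  assumes i: "i < n" and p: "p \<in> polys n"
  shows "pderivX i p \<in> polys n"
proof -
  have fin: "finite {a. p a \<noteq> 0}" and z: "\<And>a j. p a \<noteq> 0 \<Longrightarrow> j \<ge> n \<Longrightarrow> a j = 0"
    using p unfolding polys_def by auto
  have "{a. pderivX i p a \<noteq> 0} \<subseteq> (\<lambda>a. a(i := a i - 1)) ` {a. p a \<noteq> 0}"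
  proof
    fix a assume "a \<in> {a. pderivX i p a \<noteq> 0}"
    then have "p (a(i := a i + 1)) \<noteq> 0" by (auto simp: pderivX_def)
    moreover have "a = (a(i := a i + 1))(i := (a(i := a i + 1)) i - 1)" by simp
    ultimately show "a \<in> (\<lambda>a. a(i := a i - 1)) ` {a. p a \<noteq> 0}" by blast
  qed
  then have "finite {a. pderivX i p a \<noteq> 0}" using fin finite_subset by blast
  moreover have "\<forall>a. pderivX i p a \<noteq> 0 \<longrightarrow> (\<forall>j\<ge>n. a j = 0)"
    using z i by (fastforce dest: pderivX_nonzero split: if_splits)
  ultimately show ?thesis unfolding polys_def by blast
qed

text \<open>The action of d_i - c on E^phi, for the pair x = (i, c):
  p maps to d_i p + (phi_i - c) p.  When c = phi_i it lowers degrees.\<close>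
definition shifted_deriv :: "(nat \<Rightarrow> complex) \<Rightarrow> nat \<times> complex \<Rightarrow> cpoly \<Rightarrow> cpoly" where
  "shifted_deriv \<phi> x p = (\<lambda>b. pderivX (fst x) p b + (\<phi> (fst x) - snd x) * p b)"

lemma shifted_deriv_polys: "fst x < n \<Longrightarrow> p \<in> polys n \<Longrightarrow> shifted_deriv \<phi> x p \<in> polys n"
proof -
  assume i: "fst x < n" and p: "p \<in> polys n"
  have q: "pderivX (fst x) p \<in> polys n" by (rule pderivX_polys[OF i p])
  have "{a. shifted_deriv \<phi> x p a \<noteq> 0} \<subseteq> {a. pderivX (fst x) p a \<noteq> 0} \<union> {a. p a \<noteq> 0}"
    by (auto simp: shifted_deriv_def)
  then show ?thesis using p q unfolding polys_def shifted_deriv_def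
    by (auto intro: finite_subset)
qed

lemma shifted_deriv_deg_below:
  assumes i: "fst x < n" and p: "deg_below n e p"
  shows "deg_below n e (shifted_deriv \<phi> x p)"
  unfolding deg_below_def
proof (intro allI impI)
  fix b assume "shifted_deriv \<phi> x p b \<noteq> 0"
  then have "pderivX (fst x) p b \<noteq> 0 \<or> p b \<noteq> 0" unfolding shifted_deriv_def by auto
  then show "deg n b < e"
  proof
    assume "pderivX (fst x) p b \<noteq> 0"
    then have "deg n (b(fst x := Suc (b (fst x)))) < e"
      using p pderivX_nonzero unfolding deg_below_def by blast
    then show ?thesis using deg_incr[OF i] by simp
  qed (use p in \<open>auto simp: deg_below_def\<close>)
qed

lemma shifted_deriv_deg_lower:
  assumes i: "fst x < n" and resonant: "\<phi> (fst x) = snd x" and p: "deg_below n e p"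
  shows "deg_below n (e - 1) (shifted_deriv \<phi> x p)"
  unfolding deg_below_def
proof (intro allI impI)
  fix b assume "shifted_deriv \<phi> x p b \<noteq> 0"
  then have "pderivX (fst x) p b \<noteq> 0" using resonant unfolding shifted_deriv_def by auto
  then have "deg n (b(fst x := Suc (b (fst x)))) < e"
    using p pderivX_nonzero unfolding deg_below_def by blast
  then show "deg n b < e - 1" using deg_incr[OF i] by simp
qed

lemma shifted_deriv_top:
  assumes i: "fst x < n" and p: "deg_below n (Suc e) p" and b: "deg n b = e"
  shows "shifted_deriv \<phi> x p b = (\<phi> (fst x) - snd x) * p b"
proof -
  have "p (b(fst x := Suc (b (fst x)))) = 0"
    using p deg_incr[OF i, of b] b unfolding deg_below_def by auto
  then have "pderivX (fst x) p b = 0" using pderivX_nonzero by blast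
  then show ?thesis unfolding shifted_deriv_def by simp
qed

text \<open>Composite of several operators d_i - c (the head of the list is applied last).\<close>
fun shifted_derivs :: "(nat \<Rightarrow> complex) \<Rightarrow> (nat \<times> complex) list \<Rightarrow> cpoly \<Rightarrow> cpoly" where
  "shifted_derivs \<phi> [] p = p"
| "shifted_derivs \<phi> (x # xs) p = shifted_deriv \<phi> x (shifted_derivs \<phi> xs p)"

text \<open>Number of factors of a composite that lower the degree on E^phi.\<close>
definition lowering_count :: "(nat \<Rightarrow> complex) \<Rightarrow> (nat \<times> complex) list \<Rightarrow> nat" where
  "lowering_count \<phi> xs = length (filter (\<lambda>x. \<phi> (fst x) = snd x) xs)"

lemma shifted_derivs_polys:
  "\<forall>x\<in>set xs. fst x < n \<Longrightarrow> p \<in> polys n \<Longrightarrow> shifted_derivs \<phi> xs p \<in> polys n"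
  by (induction xs) (auto intro: shifted_deriv_polys)

lemma shifted_derivs_deg_below:
  "\<forall>x\<in>set xs. fst x < n \<Longrightarrow> deg_below n e p \<Longrightarrow>
   deg_below n (e - lowering_count \<phi> xs) (shifted_derivs \<phi> xs p)"
proof (induction xs)
  case Nil then show ?case by (simp add: lowering_count_def)
next
  case (Cons x xs)
  then have IH: "deg_below n (e - lowering_count \<phi> xs) (shifted_derivs \<phi> xs p)" by simp
  show ?case
  proof (cases "\<phi> (fst x) = snd x")
    case True
    then show ?thesis
      using shifted_deriv_deg_lower[of x n \<phi>, OF _ True IH] Cons.prems
      by (simp add: lowering_count_def)
  next
    case False
    then show ?thesis
      using shifted_deriv_deg_below[OF _ IH] Cons.prems by (simp add: lowering_count_def)
  qed
qed

lemma shifted_derivs_deg_below':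
  "\<forall>x\<in>set xs. fst x < n \<Longrightarrow> deg_below n e p \<Longrightarrow> deg_below n e (shifted_derivs \<phi> xs p)"
  using shifted_derivs_deg_below deg_below_mono by (metis diff_le_self)

lemma shifted_derivs_top:
  "\<forall>x\<in>set xs. fst x < n \<Longrightarrow> deg_below n (Suc d) p \<Longrightarrow> deg n b = d \<Longrightarrow>
   shifted_derivs \<phi> xs p b = (\<Prod>x\<leftarrow>xs. \<phi> (fst x) - snd x) * p b"
proof (induction xs)
  case Nil then show ?case by simp
next
  case (Cons x xs)
  have x: "fst x < n" and xs: "\<forall>x\<in>set xs. fst x < n" using Cons.prems(1) by auto
  have "shifted_derivs \<phi> (x # xs) p b = (\<phi> (fst x) - snd x) * shifted_derivs \<phi> xs p b"
    using shifted_deriv_top[OF x shifted_derivs_deg_below'[OF xs Cons.prems(2)] Cons.prems(3)]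
    by simp
  then show ?case using Cons.IH[OF xs Cons.prems(2,3)] by (simp add: mult.assoc)
qed

lemma shifted_derivs_zero: "shifted_derivs \<phi> xs (\<lambda>_. 0) = (\<lambda>_. 0)"
  by (induction xs) (auto simp: shifted_deriv_def pderivX_def)

text \<open>When every factor lowers degrees, the composite is a plain iterated partial derivative:
  its coefficient at b is a positive integer times a shifted coefficient of p.\<close>
fun deriv_factor :: "nat list \<Rightarrow> (nat \<Rightarrow> nat) \<Rightarrow> nat" where
  "deriv_factor [] b = 1"
| "deriv_factor (i # is) b = Suc (b i) * deriv_factor is (b(i := Suc (b i)))"

fun add_indices :: "(nat \<Rightarrow> nat) \<Rightarrow> nat list \<Rightarrow> nat \<Rightarrow> nat" where
  "add_indices b [] = b"
| "add_indices b (i # is) = add_indices (b(i := Suc (b i))) is"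

lemma deriv_factor_pos: "deriv_factor is b > 0"
  by (induction "is" arbitrary: b) auto

lemma add_indices_apply: "add_indices b is j = b j + count_list is j"
  by (induction "is" arbitrary: b) auto

lemma shifted_derivs_resonant:
  "\<forall>x\<in>set xs. \<phi> (fst x) = snd x \<Longrightarrow>
   shifted_derivs \<phi> xs p b = of_nat (deriv_factor (map fst xs) b) * p (add_indices b (map fst xs))"
proof (induction xs arbitrary: b)
  case Nil then show ?case by simp
next
  case (Cons x xs)
  have x: "\<phi> (fst x) = snd x" and xs: "\<forall>x\<in>set xs. \<phi> (fst x) = snd x" using Cons.prems by auto
  define b' where "b' = b(fst x := Suc (b (fst x)))"
  have "shifted_derivs \<phi> (x # xs) p b = of_nat (Suc (b (fst x))) * shifted_derivs \<phi> xs p b'"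
    unfolding shifted_derivs.simps shifted_deriv_def pderivX_def b'_def using x by simp
  also have "shifted_derivs \<phi> xs p b'
      = of_nat (deriv_factor (map fst xs) b') * p (add_indices b' (map fst xs))"
    using Cons.IH[OF xs] .
  finally show ?case by (simp add: b'_def mult.assoc distrib_right)
qed

definition monomial_indices :: "nat \<Rightarrow> (nat \<Rightarrow> nat) \<Rightarrow> nat list" where
  "monomial_indices n a = concat (map (\<lambda>j. replicate (a j) j) [0..<n])"

lemma add_indices_monomial:
  "add_indices b (monomial_indices n a) j = b j + (if j < n then a j else 0)"
proof -
  have "count_list (replicate k i) j = (if i = j then k else 0)" for k i
    by (induction k) auto
  then have "count_list (monomial_indices n a) j = (if j < n then a j else 0)"
    unfolding monomial_indices_def by (induction n) auto
  then show ?thesis by (simp add: add_indices_apply)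
qed

lemma derivative_extracts_top_coeff:
  assumes agree: "\<forall>i<n. \<phi> i = \<psi> i" and p: "p \<in> polys n"
    and dp: "deg_below n (Suc (deg n a)) p" and a: "\<forall>i\<ge>n. a i = 0"
  shows "shifted_derivs \<phi> (map (\<lambda>i. (i, \<psi> i)) (monomial_indices n a)) p b
         = (if b = (\<lambda>_. 0) then of_nat (deriv_factor (monomial_indices n a) (\<lambda>_. 0)) * p a else 0)"
proof -
  let ?is = "monomial_indices n a"
  have "\<forall>x\<in>set (map (\<lambda>i. (i, \<psi> i)) ?is). \<phi> (fst x) = snd x"
    using agree unfolding monomial_indices_def by auto
  from shifted_derivs_resonant[OF this]
  have eq: "shifted_derivs \<phi> (map (\<lambda>i. (i, \<psi> i)) ?is) p b
            = of_nat (deriv_factor ?is b) * p (add_indices b ?is)"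
    by (simp add: comp_def)
  show ?thesis
  proof (cases "b = (\<lambda>_. 0)")
    case True
    then have "add_indices b ?is = a" using a by (auto simp: fun_eq_iff add_indices_monomial)
    then show ?thesis using eq True by simp
  next
    case False
    then obtain j where bj: "b j \<noteq> 0" by (auto simp: fun_eq_iff)
    have "p (add_indices b ?is) = 0"
    proof (cases "j < n")
      case True
      have "deg n (add_indices b ?is) = deg n (\<lambda>j. b j + a j)"
        unfolding deg_def by (intro sum.cong) (auto simp: add_indices_monomial)
      then have "deg n (add_indices b ?is) = deg n b + deg n a" by (simp add: deg_add)
      moreover have "deg n b > 0" using deg_pos True bj .
      ultimately have "\<not> deg n (add_indices b ?is) < Suc (deg n a)" by simp
      then show ?thesis using dp unfolding deg_below_def by blast
    next
      case False
      then have "add_indices b ?is j \<noteq> 0" using bj by (simp add: add_indices_monomial)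
      then show ?thesis using p False unfolding polys_def by auto
    qed
    then show ?thesis using eq False by simp
  qed
qed

text \<open>Operators separating a label psi from finitely many other labels chi: for each chi,
  d+1 copies of d_i - chi_i at a coordinate i where psi and chi differ.  They kill every
  E^phi with phi|_n among the chi (on polynomials of degree at most d) and act on the
  top-degree part of E^psi as multiplication by a nonzero scalar.\<close>
definition separator :: "nat \<Rightarrow> (nat \<Rightarrow> complex) \<Rightarrow> (nat \<Rightarrow> complex) \<Rightarrow> nat" where
  "separator n \<psi> \<chi> = (SOME i. i < n \<and> \<psi> i \<noteq> \<chi> i)"

definition separating_ops ::
    "nat \<Rightarrow> nat \<Rightarrow> (nat \<Rightarrow> complex) \<Rightarrow> (nat \<Rightarrow> complex) list \<Rightarrow> (nat \<times> complex) list" where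
  "separating_ops n d \<psi> \<chi>s =
     concat (map (\<lambda>\<chi>. replicate (Suc d) (separator n \<psi> \<chi>, \<chi> (separator n \<psi> \<chi>))) \<chi>s)"

lemma separator:
  assumes "\<exists>i<n. \<psi> i \<noteq> \<chi> i"
  shows "separator n \<psi> \<chi> < n" "\<psi> (separator n \<psi> \<chi>) \<noteq> \<chi> (separator n \<psi> \<chi>)"
  using someI_ex[OF assms] unfolding separator_def by blast+

lemma separating_ops_index:
  assumes "\<forall>\<chi>\<in>set \<chi>s. \<exists>i<n. \<psi> i \<noteq> \<chi> i"
  shows "\<forall>x\<in>set (separating_ops n d \<psi> \<chi>s). fst x < n"
  using separator(1) assms unfolding separating_ops_def by auto

lemma separating_ops_factor:
  assumes "\<forall>\<chi>\<in>set \<chi>s. \<exists>i<n. \<psi> i \<noteq> \<chi> i"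
  shows "(\<Prod>x\<leftarrow>separating_ops n d \<psi> \<chi>s. \<psi> (fst x) - snd x) \<noteq> 0"
  unfolding prod_list_zero_iff separating_ops_def using separator(2) assms by auto

lemma separating_ops_kill:
  assumes sep: "\<forall>\<chi>\<in>set \<chi>s. \<exists>i<n. \<psi> i \<noteq> \<chi> i" and \<chi>: "\<chi> \<in> set \<chi>s"
    and agree: "\<forall>i<n. \<phi> i = \<chi> i" and p: "deg_below n (Suc d) p"
  shows "shifted_derivs \<phi> (separating_ops n d \<psi> \<chi>s) p = (\<lambda>_. 0)"
proof -
  let ?i = "separator n \<psi> \<chi>"
  have "\<phi> ?i = \<chi> ?i" using agree separator(1) sep \<chi> by blast
  then have "length (filter (\<lambda>x. \<phi> (fst x) = snd x) (replicate (Suc d) (?i, \<chi> ?i))) = Suc d"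
    by simp
  moreover have "length (filter P (f \<chi>)) \<le> length (filter P (concat (map f \<chi>s)))"
    for P and f :: "(nat \<Rightarrow> complex) \<Rightarrow> (nat \<times> complex) list"
    using \<chi> by (induction \<chi>s) auto
  ultimately have "Suc d \<le> lowering_count \<phi> (separating_ops n d \<psi> \<chi>s)"
    unfolding lowering_count_def separating_ops_def
    by (metis (no_types, lifting))
  then have "deg_below n 0 (shifted_derivs \<phi> (separating_ops n d \<psi> \<chi>s) p)"
    using shifted_derivs_deg_below[OF separating_ops_index[OF sep, where d = d] p, of \<phi>] by simp
  then show ?thesis unfolding deg_below_def by auto
qed


definition extraction_ops ::
    "nat \<Rightarrow> (nat \<Rightarrow> nat) \<Rightarrow> (nat \<Rightarrow> complex) \<Rightarrow> (nat \<Rightarrow> complex) list \<Rightarrow> (nat \<times> complex) list" where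
  "extraction_ops n a \<psi> \<chi>s =
     map (\<lambda>i. (i, \<psi> i)) (monomial_indices n a) @ separating_ops n (deg n a) \<psi> \<chi>s"

definition extraction_factor ::
    "nat \<Rightarrow> (nat \<Rightarrow> nat) \<Rightarrow> (nat \<Rightarrow> complex) \<Rightarrow> (nat \<Rightarrow> complex) list \<Rightarrow> complex" where
  "extraction_factor n a \<psi> \<chi>s = of_nat (deriv_factor (monomial_indices n a) (\<lambda>_. 0)) *
     (\<Prod>x\<leftarrow>separating_ops n (deg n a) \<psi> \<chi>s. \<psi> (fst x) - snd x)"

lemma shifted_derivs_append:
  "shifted_derivs \<phi> (xs @ ys) p = shifted_derivs \<phi> xs (shifted_derivs \<phi> ys p)"
  by (induction xs) auto

lemma extraction_ops_index:
  assumes "\<forall>\<chi>\<in>set \<chi>s. \<exists>i<n. \<psi> i \<noteq> \<chi> i"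
  shows "\<forall>x\<in>set (extraction_ops n a \<psi> \<chi>s). fst x < n"
  using separating_ops_index[OF assms] unfolding extraction_ops_def monomial_indices_def by auto

lemma extraction_factor_nonzero:
  assumes "\<forall>\<chi>\<in>set \<chi>s. \<exists>i<n. \<psi> i \<noteq> \<chi> i"
  shows "extraction_factor n a \<psi> \<chi>s \<noteq> 0"
  unfolding extraction_factor_def using separating_ops_factor[OF assms] deriv_factor_pos by simp

lemma extraction_on_label:
  assumes sep: "\<forall>\<chi>\<in>set \<chi>s. \<exists>i<n. \<psi> i \<noteq> \<chi> i" and agree: "\<forall>i<n. \<phi> i = \<psi> i"
    and p: "p \<in> polys n" and dp: "deg_below n (Suc (deg n a)) p" and a: "\<forall>i\<ge>n. a i = 0"
  shows "shifted_derivs \<phi> (extraction_ops n a \<psi> \<chi>s) p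
         = (\<lambda>b. if b = (\<lambda>_. 0) then extraction_factor n a \<psi> \<chi>s * p a else 0)"
proof
  fix b
  let ?sep = "separating_ops n (deg n a) \<psi> \<chi>s"
  have idx: "\<forall>x\<in>set ?sep. fst x < n" using separating_ops_index[OF sep] .
  have "(\<Prod>x\<leftarrow>?sep. \<phi> (fst x) - snd x) = (\<Prod>x\<leftarrow>?sep. \<psi> (fst x) - snd x)"
    using idx agree by (intro arg_cong[where f = prod_list] map_cong) auto
  then have top: "shifted_derivs \<phi> ?sep p a = (\<Prod>x\<leftarrow>?sep. \<psi> (fst x) - snd x) * p a"
    using shifted_derivs_top[OF idx dp] by simp
  show "shifted_derivs \<phi> (extraction_ops n a \<psi> \<chi>s) p b
        = (if b = (\<lambda>_. 0) then extraction_factor n a \<psi> \<chi>s * p a else 0)"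
    unfolding extraction_ops_def shifted_derivs_append
      derivative_extracts_top_coeff[OF agree shifted_derivs_polys[OF idx p]
        shifted_derivs_deg_below'[OF idx dp] a]
    using top by (simp add: extraction_factor_def mult.assoc)
qed

lemma extraction_off_label:
  assumes sep: "\<forall>\<chi>\<in>set \<chi>s. \<exists>i<n. \<psi> i \<noteq> \<chi> i" and \<chi>: "\<chi> \<in> set \<chi>s"
    and agree: "\<forall>i<n. \<phi> i = \<chi> i" and dp: "deg_below n (Suc (deg n a)) p"
  shows "shifted_derivs \<phi> (extraction_ops n a \<psi> \<chi>s) p = (\<lambda>_. 0)"
  by (simp add: extraction_ops_def shifted_derivs_append separating_ops_kill[OF sep \<chi> agree dp]
      shifted_derivs_zero)

definition shift_op :: "(nat \<Rightarrow> complex) list \<Rightarrow> nat \<times> complex \<Rightarrow> lelem \<Rightarrow> lelem" where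
  "shift_op phis x v = lin_add (lin_D phis (fst x) v) (lin_scale (- snd x) v)"

fun shift_ops :: "(nat \<Rightarrow> complex) list \<Rightarrow> (nat \<times> complex) list \<Rightarrow> lelem \<Rightarrow> lelem" where
  "shift_ops phis [] v = v"
| "shift_ops phis (x # xs) v = shift_op phis x (shift_ops phis xs v)"

lemma shift_ops_in:
  "is_Dsub n phis N \<Longrightarrow> v \<in> N \<Longrightarrow> \<forall>x\<in>set xs. fst x < n \<Longrightarrow> shift_ops phis xs v \<in> N"
  by (induction xs) (auto simp: shift_op_def is_Dsub_def)

lemma shift_op_component: "k < length phis \<Longrightarrow> shift_op phis x v k = shifted_deriv (phis ! k) x (v k)"
  unfolding shift_op_def lin_add_def lin_D_def lin_scale_def shifted_deriv_def twD_def
  by (auto simp: fun_eq_iff left_diff_distrib)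

lemma shift_ops_component:
  "k < length phis \<Longrightarrow> shift_ops phis xs v k = shifted_derivs (phis ! k) xs (v k)"
  by (induction xs) (auto simp: shift_op_component)

lemma in_carrier: "is_Dsub n phis N \<Longrightarrow> v \<in> N \<Longrightarrow> v \<in> lin_carrier n phis"
  unfolding is_Dsub_def by blast

lemma sum_apply: "(sum g F) x = (\<Sum>y\<in>F. g y x)"
  by (induction F rule: infinite_finite_induct) auto

lemma lin_add_plus: "lin_add v w = v + w"
  unfolding lin_add_def by (simp add: fun_eq_iff)

lemma lin_zero_0: "lin_zero = 0"
  unfolding lin_zero_def by (simp add: fun_eq_iff)

lemma Dsub_sum:
  assumes D: "is_Dsub n phis N" and F: "finite F" and g: "\<forall>x\<in>F. g x \<in> N"
  shows "sum g F \<in> N"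
  using F g
proof (induction F rule: finite_induct)
  case empty then show ?case using D by (simp add: is_Dsub_def lin_zero_def)
next
  case (insert x F)
  then show ?case using D unfolding is_Dsub_def by (simp add: lin_add_plus[symmetric])
qed

definition const_elem :: "(nat \<Rightarrow> complex) \<Rightarrow> lelem" where
  "const_elem w = (\<lambda>k b. if b = (\<lambda>_. 0) then w k else 0)"

definition coeff_vec :: "lelem \<Rightarrow> (nat \<Rightarrow> nat) \<Rightarrow> nat \<Rightarrow> complex" where
  "coeff_vec v a = (\<lambda>k. v k a)"

definition monomial_elem :: "(nat \<Rightarrow> nat) \<Rightarrow> (nat \<Rightarrow> complex) \<Rightarrow> lelem" where
  "monomial_elem a w = (\<lambda>k b. if b = a then w k else 0)"

definition support :: "lelem \<Rightarrow> (nat \<Rightarrow> nat) set" where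
  "support v = {a. \<exists>k. v k a \<noteq> 0}"

lemma const_elem_add: "const_elem (w1 + w2) = const_elem w1 + const_elem w2"
  unfolding const_elem_def by (simp add: fun_eq_iff)

lemma const_elem_zero: "const_elem 0 = 0"
  unfolding const_elem_def by (simp add: fun_eq_iff)

lemma const_elem_sum: "const_elem (sum g F) = (\<Sum>x\<in>F. const_elem (g x))"
proof (induction F rule: infinite_finite_induct)
  case (infinite A)
  then have "sum g A = 0" "(\<Sum>x\<in>A. const_elem (g x)) = 0" by auto
  then show ?case by (simp only: const_elem_zero)
next
  case empty then show ?case by (simp only: sum.empty const_elem_zero)
next
  case (insert x F)
  then show ?case by (simp only: sum.insert[OF insert.hyps(1,2)] const_elem_add insert.IH)
qed

lemma support_finite: "v \<in> lin_carrier n phis \<Longrightarrow> finite (support v)"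
proof -
  assume v: "v \<in> lin_carrier n phis"
  have "support v \<subseteq> (\<Union>k<length phis. {a. v k a \<noteq> 0})"
    using v unfolding support_def lin_carrier_def by (auto simp: not_less[symmetric])
  moreover have "finite (\<Union>k<length phis. {a. v k a \<noteq> 0})"
    using v unfolding lin_carrier_def polys_def by auto
  ultimately show ?thesis using finite_subset by blast
qed

lemma support_vars: "v \<in> lin_carrier n phis \<Longrightarrow> a \<in> support v \<Longrightarrow> \<forall>i\<ge>n. a i = 0"
proof -
  assume v: "v \<in> lin_carrier n phis" and "a \<in> support v"
  then obtain k where k: "v k a \<noteq> 0" unfolding support_def by auto
  have "k < length phis"
  proof (rule ccontr)
    assume "\<not> k < length phis"
    then have "v k = (\<lambda>_. 0)" using v unfolding lin_carrier_def by auto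
    then show False using k by simp
  qed
  then have "v k \<in> polys n" using v unfolding lin_carrier_def by auto
  then show ?thesis using k unfolding polys_def by auto
qed

lemma carrier_of_support:
  assumes "\<forall>k\<ge>length phis. v k = (\<lambda>_. 0)" and "\<forall>k b. v k b \<noteq> 0 \<longrightarrow> b \<in> S"
    and "finite S" and "\<forall>b\<in>S. \<forall>i\<ge>n. b i = 0"
  shows "v \<in> lin_carrier n phis"
proof -
  have "finite {b. v k b \<noteq> 0}" for k
    using assms(2,3) by (auto intro: finite_subset[of _ S])
  then show ?thesis using assms unfolding lin_carrier_def polys_def by blast
qed

text \<open>The label of the summand E^phi is phi restricted to the coordinates i < n (the other
  coordinates of phi do not act).\<close>
definition restrict_coords :: "nat \<Rightarrow> (nat \<Rightarrow> complex) \<Rightarrow> nat \<Rightarrow> complex" where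
  "restrict_coords n \<phi> = (\<lambda>i. if i < n then \<phi> i else 0)"

definition labels :: "nat \<Rightarrow> (nat \<Rightarrow> complex) list \<Rightarrow> (nat \<Rightarrow> complex) set" where
  "labels n phis = (\<lambda>k. restrict_coords n (phis ! k)) ` {..<length phis}"

definition label_part ::
    "nat \<Rightarrow> (nat \<Rightarrow> complex) list \<Rightarrow> (nat \<Rightarrow> complex) \<Rightarrow> (nat \<Rightarrow> complex) \<Rightarrow> nat \<Rightarrow> complex" where
  "label_part n phis \<psi> w = (\<lambda>k. if k < length phis \<and> restrict_coords n (phis ! k) = \<psi> then w k else 0)"

lemma restrict_coords_eq_iff: "restrict_coords n \<phi> = restrict_coords n \<chi> \<longleftrightarrow> (\<forall>i<n. \<phi> i = \<chi> i)"
  unfolding restrict_coords_def by (auto simp: fun_eq_iff)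

lemma label_part_decomposition:
  assumes "\<forall>k\<ge>length phis. w k = 0"
  shows "w = (\<Sum>\<psi>\<in>labels n phis. label_part n phis \<psi> w)"
proof
  fix k
  show "w k = (\<Sum>\<psi>\<in>labels n phis. label_part n phis \<psi> w) k"
  proof (cases "k < length phis")
    case True
    have "(\<Sum>\<psi>\<in>labels n phis. label_part n phis \<psi> w) k
          = (\<Sum>\<psi>\<in>labels n phis. if restrict_coords n (phis ! k) = \<psi> then w k else 0)"
      unfolding sum_apply label_part_def using True by simp
    also have "\<dots> = w k" using True by (simp add: labels_def)
    finally show ?thesis by simp
  next
    case False then show ?thesis using assms by (simp add: sum_apply label_part_def)
  qed
qed

section \<open>Extracting top coefficients inside a sub-D-module\<close>

text \<open>It is a rescaling of the image of v under the extraction operator for psi and a.\<close>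
lemma label_part_top_coeff_in:
  assumes D: "is_Dsub n phis N" and v: "v \<in> N"
    and top: "\<forall>k b. v k b \<noteq> 0 \<longrightarrow> deg n b \<le> deg n a" and a: "\<forall>i\<ge>n. a i = 0"
    and \<psi>: "\<psi> \<in> labels n phis"
  shows "const_elem (label_part n phis \<psi> (coeff_vec v a)) \<in> N"
proof -
  define \<chi>s where "\<chi>s = filter (\<lambda>\<chi>. \<chi> \<noteq> \<psi>) (map (\<lambda>k. restrict_coords n (phis ! k)) [0..<length phis])"
  define \<kappa> where "\<kappa> = extraction_factor n a \<psi> \<chi>s"
  define u where "u = shift_ops phis (extraction_ops n a \<psi> \<chi>s) v"
  have separated: "\<forall>\<chi>\<in>set \<chi>s. \<exists>i<n. \<psi> i \<noteq> \<chi> i"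
  proof
    fix \<chi> assume "\<chi> \<in> set \<chi>s"
    then obtain k where "\<chi> = restrict_coords n (phis ! k)" "\<chi> \<noteq> \<psi>" unfolding \<chi>s_def by auto
    moreover obtain k0 where "\<psi> = restrict_coords n (phis ! k0)" using \<psi> unfolding labels_def by auto
    ultimately have "restrict_coords n (phis ! k0) \<noteq> restrict_coords n (phis ! k)" by simp
    then have "\<not> (\<forall>i<n. (phis ! k0) i = (phis ! k) i)" unfolding restrict_coords_eq_iff .
    then show "\<exists>i<n. \<psi> i \<noteq> \<chi> i"
      unfolding \<open>\<chi> = _\<close> \<open>\<psi> = _\<close> by (auto simp: restrict_coords_def)
  qed
  have uN: "u \<in> N" unfolding u_def using shift_ops_in[OF D v extraction_ops_index[OF separated]] .
  have dv: "deg_below n (Suc (deg n a)) (v k)" for k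
    using top unfolding deg_below_def by (simp add: less_Suc_eq_le)
  have u_comp: "u k = (\<lambda>b. if b = (\<lambda>_. 0) then \<kappa> * label_part n phis \<psi> (coeff_vec v a) k else 0)" for k
  proof (cases "k < length phis")
    case False
    then show ?thesis using in_carrier[OF D uN] unfolding lin_carrier_def label_part_def by auto
  next
    case True
    then have uk: "u k = shifted_derivs (phis ! k) (extraction_ops n a \<psi> \<chi>s) (v k)"
      unfolding u_def by (simp add: shift_ops_component)
    show ?thesis
    proof (cases "restrict_coords n (phis ! k) = \<psi>")
      case True
      have agree: "\<forall>i<n. (phis ! k) i = \<psi> i"
      proof (intro allI impI)
        fix i assume "i < n"
        then show "(phis ! k) i = \<psi> i" using fun_cong[OF True, of i] by (simp add: restrict_coords_def)
      qed
      have "v k \<in> polys n" using in_carrier[OF D v] \<open>k < length phis\<close> unfolding lin_carrier_def by auto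
      from extraction_on_label[OF separated agree this dv a]
      show ?thesis using True \<open>k < length phis\<close> uk
        unfolding \<kappa>_def label_part_def coeff_vec_def by simp
    next
      case False
      then have "restrict_coords n (phis ! k) \<in> set \<chi>s" unfolding \<chi>s_def using \<open>k < length phis\<close> by auto
      then have "u k = (\<lambda>_. 0)"
        unfolding uk by (rule extraction_off_label[OF separated _ _ dv]) (simp add: restrict_coords_def)
      then show ?thesis using False unfolding label_part_def by (auto simp: fun_eq_iff)
    qed
  qed
  have "\<kappa> \<noteq> 0" unfolding \<kappa>_def by (rule extraction_factor_nonzero[OF separated])
  then have "const_elem (label_part n phis \<psi> (coeff_vec v a)) = lin_scale (1 / \<kappa>) u"
    unfolding lin_scale_def const_elem_def by (auto simp: fun_eq_iff u_comp)
  then show ?thesis using uN D unfolding is_Dsub_def by auto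
qed

text \<open>Summing over the labels: the top coefficient vector itself gives a constant in N.\<close>
lemma top_coeff_in:
  assumes D: "is_Dsub n phis N" and v: "v \<in> N"
    and top: "\<forall>k b. v k b \<noteq> 0 \<longrightarrow> deg n b \<le> deg n a" and a: "\<forall>i\<ge>n. a i = 0"
  shows "const_elem (coeff_vec v a) \<in> N"
proof -
  have "\<forall>k\<ge>length phis. coeff_vec v a k = 0"
    using in_carrier[OF D v] unfolding lin_carrier_def coeff_vec_def by auto
  then have "const_elem (coeff_vec v a)
             = (\<Sum>\<psi>\<in>labels n phis. const_elem (label_part n phis \<psi> (coeff_vec v a)))"
    using label_part_decomposition const_elem_sum by metis
  also have "\<dots> \<in> N"
  proof (rule Dsub_sum[OF D])
    show "finite (labels n phis)" unfolding labels_def by simp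
    show "\<forall>\<psi>\<in>labels n phis. const_elem (label_part n phis \<psi> (coeff_vec v a)) \<in> N"
      using label_part_top_coeff_in[OF D v top a] by blast
  qed
  finally show ?thesis .
qed

lemma monomial_elem_in:
  assumes D: "is_Dsub n phis N" and w: "const_elem w \<in> N" and a: "\<forall>i\<ge>n. a i = 0"
  shows "monomial_elem a w \<in> N"
  using a
proof (induction "deg n a" arbitrary: a)
  case 0
  then have "a = (\<lambda>_. 0)" using deg_zero by metis
  then show ?case using w unfolding monomial_elem_def const_elem_def by simp
next
  case (Suc e)
  have "\<exists>i<n. a i > 0"
  proof (rule ccontr)
    assume "\<not> ?thesis"
    then have "deg n a = 0" unfolding deg_def by simp
    then show False using Suc.hyps(2) by simp
  qed
  then obtain i where i: "i < n" "a i > 0" by blast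
  define a' where "a' = a(i := a i - 1)"
  have aa: "a = a'(i := Suc (a' i))" unfolding a'_def using i by auto
  have "deg n a' = e" using deg_incr[OF i(1), of a'] aa Suc.hyps(2) by simp
  moreover have "\<forall>j\<ge>n. a' j = 0" using Suc.prems i unfolding a'_def by auto
  ultimately have IH: "monomial_elem a' w \<in> N" using Suc.hyps(1) by metis
  have "b i \<noteq> 0 \<and> b(i := b i - 1) = a' \<longleftrightarrow> b = a" for b :: "nat \<Rightarrow> nat"
  proof
    assume h: "b i \<noteq> 0 \<and> b(i := b i - 1) = a'"
    show "b = a"
    proof
      fix j
      have "(b(i := b i - 1)) j = a' j" using h by simp
      then show "b j = a j" using h i unfolding a'_def by (cases "j = i") auto
    qed
  qed (use i in \<open>simp add: a'_def\<close>)
  then have "monomial_elem a w = lin_X i (monomial_elem a' w)"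
    unfolding monomial_elem_def lin_X_def mulX_def by (intro ext) (use i in auto)
  then show ?case using IH D i unfolding is_Dsub_def by auto
qed

text \<open>Characterization of N by its constants, first direction: all coefficient vectors of
  an element of N give constants in N (induction on the size of the support, removing a
  monomial of maximal degree).\<close>
lemma coeffs_in:
  assumes D: "is_Dsub n phis N" and v: "v \<in> N"
  shows "const_elem (coeff_vec v a) \<in> N"
  using v
proof (induction "card (support v)" arbitrary: v a rule: less_induct)
  case less
  have vc: "v \<in> lin_carrier n phis" using in_carrier[OF D less.prems] .
  have fin: "finite (support v)" using support_finite[OF vc] .
  show ?case
  proof (cases "support v = {}")
    case True
    then have "coeff_vec v a = 0" unfolding support_def coeff_vec_def by (auto simp: fun_eq_iff)
    then show ?thesis using D const_elem_zero lin_zero_0 unfolding is_Dsub_def by simp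
  next
    case False
    have "Max (deg n ` support v) \<in> deg n ` support v" using fin False by simp
    then obtain a0 where "a0 \<in> support v" "deg n a0 = Max (deg n ` support v)" by auto
    moreover have "\<forall>b\<in>support v. deg n b \<le> Max (deg n ` support v)" using fin by simp
    ultimately have a0: "a0 \<in> support v" "\<forall>b\<in>support v. deg n b \<le> deg n a0" by auto
    have top: "\<forall>k b. v k b \<noteq> 0 \<longrightarrow> deg n b \<le> deg n a0" using a0(2) unfolding support_def by auto
    have a0_vars: "\<forall>i\<ge>n. a0 i = 0" using support_vars[OF vc a0(1)] .
    have c0: "const_elem (coeff_vec v a0) \<in> N" using top_coeff_in[OF D less.prems top a0_vars] .
    define v' where "v' = lin_add v (lin_scale (-1) (monomial_elem a0 (coeff_vec v a0)))"
    have v'N: "v' \<in> N"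
      using D less.prems monomial_elem_in[OF D c0 a0_vars] unfolding v'_def is_Dsub_def by auto
    have v'_eq: "v' k b = (if b = a0 then 0 else v k b)" for k b
      unfolding v'_def lin_add_def lin_scale_def monomial_elem_def coeff_vec_def by simp
    have "support v' = support v - {a0}" unfolding support_def using v'_eq by auto
    then have "card (support v') < card (support v)" using fin a0(1) card_Diff1_less by metis
    then have IH: "const_elem (coeff_vec v' a) \<in> N" for a using less.hyps v'N by blast
    show ?thesis
    proof (cases "a = a0")
      case False
      then have "coeff_vec v' a = coeff_vec v a" unfolding coeff_vec_def using v'_eq by simp
      then show ?thesis using IH by metis
    qed (use c0 in simp)
  qed
qed

text \<open>Second direction: an element of the carrier all of whose coefficient vectors give
  constants in N lies in N, being the finite sum of its monomial parts.\<close>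
lemma coeffs_out:
  assumes D: "is_Dsub n phis N" and vc: "v \<in> lin_carrier n phis"
    and c: "\<forall>a. const_elem (coeff_vec v a) \<in> N"
  shows "v \<in> N"
proof -
  have fin: "finite (support v)" using support_finite[OF vc] .
  have "v = (\<Sum>a\<in>support v. monomial_elem a (coeff_vec v a))"
  proof (intro ext)
    fix k b
    have "(\<Sum>a\<in>support v. monomial_elem a (coeff_vec v a)) k b
          = (\<Sum>a\<in>support v. if b = a then v k b else 0)"
      unfolding sum_apply by (rule sum.cong) (auto simp: monomial_elem_def coeff_vec_def)
    also have "\<dots> = v k b" using fin by (simp add: support_def)
    finally show "v k b = (\<Sum>a\<in>support v. monomial_elem a (coeff_vec v a)) k b" by simp
  qed
  also have "\<dots> \<in> N"
  proof (rule Dsub_sum[OF D fin], rule ballI)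
    fix a assume "a \<in> support v"
    then show "monomial_elem a (coeff_vec v a) \<in> N"
      using monomial_elem_in[OF D] c support_vars[OF vc] by blast
  qed
  finally show ?thesis .
qed


section \<open>Linear algebra of pure vectors\<close>

text \<open>C^m, realised as nat => complex, as a complex vector space.\<close>
definition sc :: "complex \<Rightarrow> (nat \<Rightarrow> complex) \<Rightarrow> (nat \<Rightarrow> complex)" where
  "sc c w = (\<lambda>k. c * w k)"

interpretation V: vector_space sc
  by unfold_locales (simp_all add: sc_def fun_eq_iff distrib_left distrib_right mult.assoc)

interpretation VP: vector_space_pair sc sc ..

lemma sum_sc_apply: "(\<Sum>b\<in>B. sc (u b) (f b)) k = (\<Sum>b\<in>B. u b * f b k)"
  by (simp add: sum_apply sc_def)

text \<open>Pure vectors are supported on summands sharing one label; on a pure vector the label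
  action below is multiplication by a scalar.\<close>
definition pure :: "nat \<Rightarrow> (nat \<Rightarrow> complex) list \<Rightarrow> (nat \<Rightarrow> complex) set" where
  "pure n phis = {b. \<forall>k k'. b k \<noteq> 0 \<longrightarrow> b k' \<noteq> 0 \<longrightarrow> (\<forall>i<n. (phis ! k) i = (phis ! k') i)}"

text \<open>Componentwise multiplication of a vector by the i-th coordinates of the labels; this is
  how d_i acts on constant coefficient vectors, modulo the derivative term.\<close>
definition diag_action :: "(nat \<Rightarrow> complex) list \<Rightarrow> nat \<Rightarrow> (nat \<Rightarrow> complex) \<Rightarrow> nat \<Rightarrow> complex" where
  "diag_action phis i w = (\<lambda>k. if k < length phis then (phis ! k) i * w k else w k)"

definition label_of :: "(nat \<Rightarrow> complex) list \<Rightarrow> (nat \<Rightarrow> complex) \<Rightarrow> nat \<Rightarrow> complex" where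
  "label_of phis b = phis ! (SOME k. b k \<noteq> 0)"

definition unit_vec :: "nat \<Rightarrow> nat \<Rightarrow> complex" where
  "unit_vec k = (\<lambda>j. if j = k then 1 else 0)"

lemma diag_action_pure:
  assumes b: "b \<noteq> 0" "b \<in> pure n phis" "\<forall>k\<ge>length phis. b k = 0" and i: "i < n"
  shows "diag_action phis i b = sc (label_of phis b i) b"
proof
  fix k
  have "\<exists>k. b k \<noteq> 0" using b(1) by (auto simp: fun_eq_iff)
  then have k0: "b (SOME k. b k \<noteq> 0) \<noteq> 0" by (rule someI_ex)
  show "diag_action phis i b k = sc (label_of phis b i) b k"
  proof (cases "b k = 0")
    case False
    then have "k < length phis" using b(3) not_less by blast
    moreover have "(phis ! k) i = label_of phis b i"
      using b(2) False k0 i unfolding pure_def label_of_def by blast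
    ultimately show ?thesis by (simp add: diag_action_def sc_def)
  qed (simp add: diag_action_def sc_def)
qed

text \<open>A basis of W2 consisting of pure vectors extends to such a basis of W1, provided both
  spaces are spanned by their pure vectors; the bases are finite since W1 lies in C^m.\<close>
lemma pure_basis_extension:
  assumes s1: "V.subspace W1" and s2: "V.subspace W2" and sub: "W2 \<subseteq> W1"
    and bd: "\<forall>w\<in>W1. \<forall>k\<ge>length phis. w k = 0"
    and sp1: "W1 \<subseteq> V.span (W1 \<inter> pure n phis)" and sp2: "W2 \<subseteq> V.span (W2 \<inter> pure n phis)"
  obtains B1 B2 where "B2 \<subseteq> B1" "B1 \<subseteq> W1 \<inter> pure n phis" "V.independent B1" "finite B1"
    "V.span B1 = W1" "V.span B2 = W2"
proof -
  obtain B2 where B2: "B2 \<subseteq> W2 \<inter> pure n phis" "V.independent B2" "W2 \<inter> pure n phis \<subseteq> V.span B2"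
    by (rule V.maximal_independent_subset_extend[OF empty_subsetI V.independent_empty])
  have span2: "V.span B2 = W2"
    using sp2 V.span_mono[OF B2(3)] V.span_span V.span_minimal[OF _ s2] B2(1) by blast
  have "B2 \<subseteq> W1 \<inter> pure n phis" using B2(1) sub by blast
  then obtain B1 where B1: "B2 \<subseteq> B1" "B1 \<subseteq> W1 \<inter> pure n phis" "V.independent B1"
      "W1 \<inter> pure n phis \<subseteq> V.span B1"
    by (rule V.maximal_independent_subset_extend[OF _ B2(2)])
  have span1: "V.span B1 = W1"
    using sp1 V.span_mono[OF B1(4)] V.span_span V.span_minimal[OF _ s1] B1(2) by blast
  have "W1 \<subseteq> V.span (unit_vec ` {..<length phis})"
  proof
    fix w assume w: "w \<in> W1"
    have "w = (\<Sum>k<length phis. sc (w k) (unit_vec k))"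
    proof
      fix j
      have "(\<Sum>k<length phis. sc (w k) (unit_vec k)) j = (\<Sum>k<length phis. if j = k then w j else 0)"
        unfolding sum_sc_apply by (rule sum.cong) (auto simp: unit_vec_def)
      also have "\<dots> = w j" using bd w by auto
      finally show "w j = (\<Sum>k<length phis. sc (w k) (unit_vec k)) j" by simp
    qed
    also have "\<dots> \<in> V.span (unit_vec ` {..<length phis})"
      by (intro V.span_sum V.span_scale V.span_base) auto
    finally show "w \<in> V.span (unit_vec ` {..<length phis})" .
  qed
  then have "finite B1"
    using V.independent_span_bound[of "unit_vec ` {..<length phis}" B1] B1 by auto
  with B1 span1 span2 show thesis using that by blast
qed

text \<open>Given a finite pure basis B1 of W1 extending a basis B2 of W2, and an enumeration cl of
  the new vectors B1 - B2, the linear map sending cl!j to the j-th unit vector and B2 to 0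
  realises W1/W2 as C^d, and it intertwines the label actions when coordinate j is labelled
  by the label of cl!j.\<close>
locale quotient_basis =
  fixes n :: nat and phis :: "(nat \<Rightarrow> complex) list"
    and B1 B2 :: "(nat \<Rightarrow> complex) set" and cl :: "(nat \<Rightarrow> complex) list"
  assumes independent: "V.independent B1" and finite: "finite B1" and B2_sub: "B2 \<subseteq> B1"
    and B1_pure: "B1 \<subseteq> pure n phis" and B1_bounded: "\<forall>b\<in>B1. \<forall>k\<ge>length phis. b k = 0"
    and cl_set: "set cl = B1 - B2" and cl_distinct: "distinct cl"
begin

definition coord_target :: "(nat \<Rightarrow> complex) \<Rightarrow> nat \<Rightarrow> complex" where
  "coord_target b = (\<lambda>j. if j < length cl \<and> cl ! j = b then 1 else 0)"

definition qmap :: "(nat \<Rightarrow> complex) \<Rightarrow> nat \<Rightarrow> complex" where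
  "qmap = VP.construct B1 coord_target"

definition qlabels :: "(nat \<Rightarrow> complex) list" where
  "qlabels = map (label_of phis) cl"

lemma qmap_linear: "Vector_Spaces.linear sc sc qmap"
  unfolding qmap_def by (rule VP.linear_construct[OF independent])

interpretation Q: Vector_Spaces.linear sc sc qmap by (rule qmap_linear)

lemma cl_in: "j < length cl \<Longrightarrow> cl ! j \<in> B1" "j < length cl \<Longrightarrow> cl ! j \<notin> B2"
  using cl_set nth_mem[of j cl] by auto

lemma qmap_basis: "b \<in> B1 \<Longrightarrow> qmap b = coord_target b"
  unfolding qmap_def by (rule VP.construct_basis[OF independent])

lemma span_B1_repr: "w \<in> V.span B1 \<Longrightarrow> \<exists>u. w = (\<Sum>b\<in>B1. sc (u b) b)"
  using V.span_finite[OF finite] by auto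

lemma qmap_coords: "qmap (\<Sum>b\<in>B1. sc (u b) b) = (\<lambda>j. if j < length cl then u (cl ! j) else 0)"
proof
  fix j
  have "qmap (\<Sum>b\<in>B1. sc (u b) b) = (\<Sum>b\<in>B1. sc (u b) (coord_target b))"
    by (simp add: Q.sum Q.scale qmap_basis)
  then have "qmap (\<Sum>b\<in>B1. sc (u b) b) j = (\<Sum>b\<in>B1. if j < length cl \<and> cl ! j = b then u b else 0)"
    by (auto simp: sum_sc_apply coord_target_def intro!: sum.cong)
  also have "\<dots> = (if j < length cl then u (cl ! j) else 0)"
    using finite cl_in(1)[of j] by simp
  finally show "qmap (\<Sum>b\<in>B1. sc (u b) b) j = (if j < length cl then u (cl ! j) else 0)" .
qed

lemma qmap_bounded: "w \<in> V.span B1 \<Longrightarrow> length cl \<le> j \<Longrightarrow> qmap w j = 0"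
  using span_B1_repr qmap_coords by fastforce

lemma qmap_onto:
  assumes y: "\<forall>j\<ge>length cl. y j = 0"
  shows "\<exists>w\<in>V.span B1. qmap w = y"
proof
  define w where "w = (\<Sum>j<length cl. sc (y j) (cl ! j))"
  show "w \<in> V.span B1" unfolding w_def
    by (intro V.span_sum V.span_scale V.span_base) (use cl_in in auto)
  have cl_target: "coord_target (cl ! j) = unit_vec j" if "j < length cl" for j
    using that cl_distinct nth_eq_iff_index_eq[of cl _ j]
    unfolding coord_target_def unit_vec_def by (auto simp: fun_eq_iff)
  show "qmap w = y"
  proof
    fix j'
    have "qmap w = (\<Sum>j<length cl. sc (y j) (unit_vec j))" unfolding w_def
      by (simp add: Q.sum Q.scale qmap_basis cl_in cl_target)
    then have "qmap w j' = (\<Sum>j<length cl. y j * unit_vec j j')" by (simp add: sum_sc_apply)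
    also have "\<dots> = (\<Sum>j<length cl. if j = j' then y j else 0)"
      by (rule sum.cong) (auto simp: unit_vec_def)
    also have "\<dots> = y j'" using y by (cases "j' < length cl") simp_all
    finally show "qmap w j' = y j'" .
  qed
qed

lemma qmap_kernel:
  assumes w: "w \<in> V.span B1"
  shows "qmap w = 0 \<longleftrightarrow> w \<in> V.span B2"
proof
  assume zero: "qmap w = 0"
  obtain u where u: "w = (\<Sum>b\<in>B1. sc (u b) b)" using span_B1_repr[OF w] by blast
  have "u b = 0" if "b \<in> B1 - B2" for b
  proof -
    have "b \<in> set cl" using that cl_set by simp
    then obtain j where j: "j < length cl" "cl ! j = b" by (auto simp: in_set_conv_nth)
    have "qmap w j = u (cl ! j)" using qmap_coords[of u] u j(1) by simp
    then show ?thesis using zero j(2) by simp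
  qed
  then have "w = (\<Sum>b\<in>B2. sc (u b) b)" unfolding u
    by (intro sum.mono_neutral_right[OF finite B2_sub]) (auto simp: sc_def fun_eq_iff)
  also have "\<dots> \<in> V.span B2" by (intro V.span_sum V.span_scale V.span_base)
  finally show "w \<in> V.span B2" .
next
  assume "w \<in> V.span B2"
  then obtain u where u: "w = (\<Sum>b\<in>B2. sc (u b) b)"
    using V.span_finite[OF finite_subset[OF B2_sub finite]] by auto
  have "coord_target b = 0" if "b \<in> B2" for b
  proof
    fix j
    have "\<not> (j < length cl \<and> cl ! j = b)" using that cl_in(2) by metis
    then show "coord_target b j = 0 j" unfolding coord_target_def by simp
  qed
  then show "qmap w = 0" unfolding u using B2_sub
    by (simp add: Q.sum Q.scale qmap_basis subsetD)
qed

lemma qmap_diag: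
  assumes i: "i < n" and w: "w \<in> V.span B1"
  shows "qmap (diag_action phis i w) = diag_action qlabels i (qmap w)"
proof -
  obtain u where u: "w = (\<Sum>b\<in>B1. sc (u b) b)" using span_B1_repr[OF w] by blast
  have "0 \<notin> B1" using independent V.dependent_zero by blast
  have labelled: "diag_action phis i b = sc (label_of phis b i) b" if "b \<in> B1" for b
  proof (rule diag_action_pure[OF _ _ _ i])
    show "b \<noteq> 0" using that \<open>0 \<notin> B1\<close> by blast
    show "b \<in> pure n phis" using that B1_pure by blast
    show "\<forall>k\<ge>length phis. b k = 0" using that B1_bounded by blast
  qed
  have "diag_action phis i w = (\<Sum>b\<in>B1. sc (u b) (diag_action phis i b))"
    unfolding u by (auto simp: fun_eq_iff sum_sc_apply diag_action_def sum_distrib_left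
        mult.left_commute)
  also have "\<dots> = (\<Sum>b\<in>B1. sc (u b * label_of phis b i) b)"
    by (rule sum.cong) (auto simp: labelled sc_def fun_eq_iff)
  finally have "qmap (diag_action phis i w)
      = (\<lambda>j. if j < length cl then u (cl ! j) * label_of phis (cl ! j) i else 0)"
    using qmap_coords by simp
  moreover have "qmap w = (\<lambda>j. if j < length cl then u (cl ! j) else 0)" using qmap_coords u by simp
  ultimately show ?thesis unfolding diag_action_def qlabels_def by (auto simp: fun_eq_iff)
qed

end

lemma quotient_of_pure_subspaces:
  assumes s1: "V.subspace W1" and s2: "V.subspace W2" and sub: "W2 \<subseteq> W1"
    and bd: "\<forall>w\<in>W1. \<forall>k\<ge>length phis. w k = 0"
    and sp1: "W1 \<subseteq> V.span (W1 \<inter> pure n phis)" and sp2: "W2 \<subseteq> V.span (W2 \<inter> pure n phis)"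
  shows "\<exists>psis L. Vector_Spaces.linear sc sc L \<and> (\<forall>w\<in>W1. \<forall>j\<ge>length psis. L w j = 0) \<and>
     (\<forall>y. (\<forall>j\<ge>length psis. y j = 0) \<longrightarrow> (\<exists>w\<in>W1. L w = y)) \<and>
     (\<forall>w\<in>W1. L w = 0 \<longleftrightarrow> w \<in> W2) \<and>
     (\<forall>i<n. \<forall>w\<in>W1. L (diag_action phis i w) = diag_action psis i (L w))"
proof -
  obtain B1 B2 where B: "B2 \<subseteq> B1" "B1 \<subseteq> W1 \<inter> pure n phis" "V.independent B1" "finite B1"
      "V.span B1 = W1" "V.span B2 = W2"
    using pure_basis_extension[OF assms] .
  obtain cl where cl: "set cl = B1 - B2" "distinct cl"
    using finite_distinct_list[of "B1 - B2"] B(4) by blast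
  interpret quotient_basis n phis B1 B2 cl
    using B cl bd by unfold_locales auto
  have len: "length qlabels = length cl" unfolding qlabels_def by simp
  show ?thesis
  proof (intro exI[of _ qlabels] exI[of _ qmap] conjI allI impI ballI)
    show "Vector_Spaces.linear sc sc qmap" by (rule qmap_linear)
    show "qmap w j = 0" if "w \<in> W1" "length qlabels \<le> j" for w j
      using qmap_bounded that B(5) len by simp
    show "\<exists>w\<in>W1. qmap w = y" if "\<forall>j\<ge>length qlabels. y j = 0" for y
      using qmap_onto that B(5) len by simp
    show "qmap w = 0 \<longleftrightarrow> w \<in> W2" if "w \<in> W1" for w
      using qmap_kernel that B(5,6) by simp
    show "qmap (diag_action phis i w) = diag_action qlabels i (qmap w)" if "i < n" "w \<in> W1" for i w
      using qmap_diag that B(5) by simp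
  qed
qed


text \<open>W(N): the constant vectors of N.  By the results above, N is determined by W(N).\<close>
definition const_space :: "lelem set \<Rightarrow> (nat \<Rightarrow> complex) set" where
  "const_space N = {w. const_elem w \<in> N}"

lemma Dsub_iff_coeffs:
  assumes "is_Dsub n phis N"
  shows "v \<in> N \<longleftrightarrow> v \<in> lin_carrier n phis \<and> (\<forall>a. coeff_vec v a \<in> const_space N)"
  using in_carrier[OF assms] coeffs_in[OF assms] coeffs_out[OF assms]
  unfolding const_space_def by blast

lemma const_space_subspace:
  assumes D: "is_Dsub n phis N"
  shows "V.subspace (const_space N)"
  unfolding V.subspace_def const_space_def
proof (intro conjI ballI allI)
  show "0 \<in> {w. const_elem w \<in> N}" using D const_elem_zero lin_zero_0 unfolding is_Dsub_def by simp
next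
  fix x y assume "x \<in> {w. const_elem w \<in> N}" "y \<in> {w. const_elem w \<in> N}"
  then show "x + y \<in> {w. const_elem w \<in> N}"
    using D const_elem_add lin_add_plus unfolding is_Dsub_def by simp
next
  fix c x assume "x \<in> {w. const_elem w \<in> N}"
  moreover have "const_elem (sc c x) = lin_scale c (const_elem x)"
    unfolding const_elem_def sc_def lin_scale_def by (simp add: fun_eq_iff)
  ultimately show "sc c x \<in> {w. const_elem w \<in> N}" using D unfolding is_Dsub_def by simp
qed

lemma const_space_bounded:
  assumes D: "is_Dsub n phis N"
  shows "\<forall>w\<in>const_space N. \<forall>k\<ge>length phis. w k = 0"
proof (intro ballI allI impI)
  fix w k assume "w \<in> const_space N" "length phis \<le> k"
  then have "const_elem w k = (\<lambda>_. 0)"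
    using in_carrier[OF D] unfolding lin_carrier_def const_space_def by auto
  then have "const_elem w k (\<lambda>_. 0) = 0" by simp
  then show "w k = 0" unfolding const_elem_def by simp
qed

text \<open>W(N) is spanned by pure vectors: the label parts of a constant of N are again in N.\<close>
lemma const_space_pure_span:
  assumes D: "is_Dsub n phis N"
  shows "const_space N \<subseteq> V.span (const_space N \<inter> pure n phis)"
proof
  fix w assume w: "w \<in> const_space N"
  have part_in: "label_part n phis \<psi> w \<in> const_space N \<inter> pure n phis"
    if "\<psi> \<in> labels n phis" for \<psi>
  proof
    have top: "\<forall>k b. const_elem w k b \<noteq> 0 \<longrightarrow> deg n b \<le> deg n (\<lambda>_. 0)"
      unfolding const_elem_def by (auto simp: deg_def)
    have "coeff_vec (const_elem w) (\<lambda>_. 0) = w" unfolding coeff_vec_def const_elem_def by simp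
    then show "label_part n phis \<psi> w \<in> const_space N"
      using label_part_top_coeff_in[OF D _ top _ that] w unfolding const_space_def by simp
    have "(phis ! k) i = (phis ! k') i"
      if "label_part n phis \<psi> w k \<noteq> 0" "label_part n phis \<psi> w k' \<noteq> 0" "i < n" for k k' i
    proof -
      have "restrict_coords n (phis ! k) = restrict_coords n (phis ! k')"
        using that(1,2) unfolding label_part_def by (metis (full_types))
      then show ?thesis using that(3) restrict_coords_eq_iff by blast
    qed
    then show "label_part n phis \<psi> w \<in> pure n phis" unfolding pure_def by blast
  qed
  have "w = (\<Sum>\<psi>\<in>labels n phis. label_part n phis \<psi> w)"
    using label_part_decomposition const_space_bounded[OF D] w by metis
  also have "\<dots> \<in> V.span (const_space N \<inter> pure n phis)"
    by (intro V.span_sum V.span_base part_in)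
  finally show "w \<in> V.span (const_space N \<inter> pure n phis)" .
qed

section \<open>Applying a linear map coefficientwise\<close>

lemma coeff_vec_add: "coeff_vec (lin_add v w) b = coeff_vec v b + coeff_vec w b"
  unfolding coeff_vec_def lin_add_def by (simp add: fun_eq_iff)

lemma coeff_vec_scale: "coeff_vec (lin_scale c v) b = sc c (coeff_vec v b)"
  unfolding coeff_vec_def lin_scale_def sc_def by simp

lemma coeff_vec_X: "coeff_vec (lin_X i v) b = (if b i = 0 then 0 else coeff_vec v (b(i := b i - 1)))"
  unfolding coeff_vec_def lin_X_def mulX_def by (simp add: fun_eq_iff)

lemma coeff_vec_D:
  assumes "v \<in> lin_carrier n phis"
  shows "coeff_vec (lin_D phis i v) b
         = sc (of_nat (b i + 1)) (coeff_vec v (b(i := b i + 1))) + diag_action phis i (coeff_vec v b)"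
proof
  fix k
  have "k \<ge> length phis \<Longrightarrow> v k = (\<lambda>_. 0)" using assms unfolding lin_carrier_def by auto
  then show "coeff_vec (lin_D phis i v) b k
      = (sc (of_nat (b i + 1)) (coeff_vec v (b(i := b i + 1))) + diag_action phis i (coeff_vec v b)) k"
    unfolding coeff_vec_def lin_D_def twD_def pderivX_def sc_def diag_action_def
    by (cases "k < length phis") auto
qed

definition lift :: "((nat \<Rightarrow> complex) \<Rightarrow> nat \<Rightarrow> complex) \<Rightarrow> lelem \<Rightarrow> lelem" where
  "lift L v = (\<lambda>j b. L (coeff_vec v b) j)"

locale lifted_quotient =
  fixes n :: nat and phis psis :: "(nat \<Rightarrow> complex) list" and N1 N2 :: "lelem set"
    and L :: "(nat \<Rightarrow> complex) \<Rightarrow> nat \<Rightarrow> complex"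
  assumes N1: "is_Dsub n phis N1" and N2: "is_Dsub n phis N2"
    and linear: "Vector_Spaces.linear sc sc L"
    and bounded: "\<forall>w\<in>const_space N1. \<forall>j\<ge>length psis. L w j = 0"
    and onto: "\<forall>y. (\<forall>j\<ge>length psis. y j = 0) \<longrightarrow> (\<exists>w\<in>const_space N1. L w = y)"
    and kernel: "\<forall>w\<in>const_space N1. L w = 0 \<longleftrightarrow> w \<in> const_space N2"
    and equivariant: "\<forall>i<n. \<forall>w\<in>const_space N1. L (diag_action phis i w) = diag_action psis i (L w)"
begin

interpretation L: Vector_Spaces.linear sc sc L by (rule linear)

lemma coeff_in: "v \<in> N1 \<Longrightarrow> coeff_vec v b \<in> const_space N1"
  using Dsub_iff_coeffs[OF N1] by blast

lemma lift_carrier: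
  assumes v: "v \<in> N1"
  shows "lift L v \<in> lin_carrier n psis"
proof (rule carrier_of_support)
  have vc: "v \<in> lin_carrier n phis" using in_carrier[OF N1 v] .
  show "\<forall>k\<ge>length psis. lift L v k = (\<lambda>_. 0)"
    unfolding lift_def using bounded coeff_in[OF v] by auto
  show "\<forall>k b. lift L v k b \<noteq> 0 \<longrightarrow> b \<in> support v"
  proof (intro allI impI)
    fix k b assume "lift L v k b \<noteq> 0"
    then have "coeff_vec v b \<noteq> 0" unfolding lift_def by auto
    then show "b \<in> support v" unfolding support_def coeff_vec_def by (auto simp: fun_eq_iff)
  qed
  show "finite (support v)" "\<forall>b\<in>support v. \<forall>i\<ge>n. b i = 0"
    using support_finite[OF vc] support_vars[OF vc] by auto
qed

text \<open>A choice of preimages under L, sending 0 to 0 so that supports stay finite.\<close>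
definition preimage :: "(nat \<Rightarrow> complex) \<Rightarrow> nat \<Rightarrow> complex" where
  "preimage y = (if y = 0 then 0 else (SOME w. w \<in> const_space N1 \<and> L w = y))"

lemma preimage:
  assumes "\<forall>j\<ge>length psis. y j = 0"
  shows "preimage y \<in> const_space N1" "L (preimage y) = y"
proof -
  have "preimage y \<in> const_space N1 \<and> L (preimage y) = y"
  proof (cases "y = 0")
    case True
    then show ?thesis using V.subspace_0[OF const_space_subspace[OF N1]]
      unfolding preimage_def by simp
  next
    case False
    have "\<exists>w. w \<in> const_space N1 \<and> L w = y" using onto assms by blast
    from someI_ex[OF this] show ?thesis using False unfolding preimage_def by simp
  qed
  then show "preimage y \<in> const_space N1" "L (preimage y) = y" by auto
qed

lemma lift_onto:
  assumes u: "u \<in> lin_carrier n psis"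
  shows "u \<in> lift L ` N1"
proof
  define v where "v = (\<lambda>k b. preimage (coeff_vec u b) k)"
  have u_bd: "\<forall>j\<ge>length psis. coeff_vec u b j = 0" for b
    using u unfolding lin_carrier_def coeff_vec_def by auto
  have v_coeff: "coeff_vec v b = preimage (coeff_vec u b)" for b
    unfolding v_def coeff_vec_def by simp
  have "v \<in> lin_carrier n phis"
  proof (rule carrier_of_support)
    show "\<forall>k\<ge>length phis. v k = (\<lambda>_. 0)"
      using preimage(1)[OF u_bd] const_space_bounded[OF N1] unfolding v_def by auto
    show "\<forall>k b. v k b \<noteq> 0 \<longrightarrow> b \<in> support u"
      unfolding v_def preimage_def support_def coeff_vec_def by (auto simp: fun_eq_iff)
    show "finite (support u)" "\<forall>b\<in>support u. \<forall>i\<ge>n. b i = 0"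
      using support_finite[OF u] support_vars[OF u] by auto
  qed
  then show "v \<in> N1"
    using Dsub_iff_coeffs[OF N1] v_coeff preimage(1)[OF u_bd] by simp
  show "u = lift L v"
    unfolding lift_def v_coeff preimage(2)[OF u_bd] by (simp add: coeff_vec_def)
qed

lemma lift_image: "lift L ` N1 = lin_carrier n psis"
  using lift_carrier lift_onto by blast

lemma lift_add: "lift L (lin_add v w) = lin_add (lift L v) (lift L w)"
  unfolding lift_def coeff_vec_add by (simp add: L.add lin_add_def)

lemma lift_scale: "lift L (lin_scale c v) = lin_scale c (lift L v)"
  unfolding lift_def coeff_vec_scale L.scale by (simp add: lin_scale_def sc_def)

lemma lift_X: "lift L (lin_X i v) = lin_X i (lift L v)"
proof (intro ext)
  fix j b
  show "lift L (lin_X i v) j b = lin_X i (lift L v) j b"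
    unfolding lift_def coeff_vec_X unfolding lin_X_def mulX_def by simp
qed

lemma lift_D:
  assumes i: "i < n" and v: "v \<in> N1"
  shows "lift L (lin_D phis i v) = lin_D psis i (lift L v)"
proof (intro ext)
  fix j and b :: "nat \<Rightarrow> nat"
  define b' where "b' = b(i := b i + 1)"
  have "lift L (lin_D phis i v) j b
        = L (sc (of_nat (b i + 1)) (coeff_vec v b') + diag_action phis i (coeff_vec v b)) j"
    unfolding lift_def coeff_vec_D[OF in_carrier[OF N1 v]] b'_def by simp
  also have "\<dots> = of_nat (b i + 1) * L (coeff_vec v b') j + diag_action psis i (L (coeff_vec v b)) j"
    using equivariant i coeff_in[OF v] unfolding L.add L.scale by (simp add: sc_def)
  also have "\<dots> = lin_D psis i (lift L v) j b"
  proof (cases "j < length psis")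
    case False
    then have "L (coeff_vec v b') j = 0" using bounded coeff_in[OF v] by simp
    then show ?thesis using False
      unfolding lin_D_def twD_def pderivX_def diag_action_def lift_def b'_def by simp
  qed (simp add: lin_D_def twD_def pderivX_def diag_action_def lift_def b'_def)
  finally show "lift L (lin_D phis i v) j b = lin_D psis i (lift L v) j b" .
qed

lemma lift_kernel:
  assumes v: "v \<in> N1"
  shows "lift L v = lin_zero \<longleftrightarrow> v \<in> N2"
proof -
  have "lift L v = lin_zero \<longleftrightarrow> (\<forall>b. L (coeff_vec v b) = 0)"
    unfolding lift_def lin_zero_def by (auto simp: fun_eq_iff)
  also have "\<dots> \<longleftrightarrow> (\<forall>b. coeff_vec v b \<in> const_space N2)"
    using kernel coeff_in[OF v] by blast
  also have "\<dots> \<longleftrightarrow> v \<in> N2"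
    using Dsub_iff_coeffs[OF N2] in_carrier[OF N1 v] by blast
  finally show ?thesis .
qed

end

lemma lifted_quotient_exists:
  assumes D1: "is_Dsub n phis N1" and D2: "is_Dsub n phis N2" and sub: "N2 \<subseteq> N1"
  shows "\<exists>psis L. lifted_quotient n phis psis N1 N2 L"
proof -
  have "const_space N2 \<subseteq> const_space N1" using sub unfolding const_space_def by auto
  from quotient_of_pure_subspaces[OF const_space_subspace[OF D1] const_space_subspace[OF D2] this
      const_space_bounded[OF D1] const_space_pure_span[OF D1] const_space_pure_span[OF D2]]
  obtain psis L where "Vector_Spaces.linear sc sc L"
    "\<forall>w\<in>const_space N1. \<forall>j\<ge>length psis. L w j = 0"
    "\<forall>y. (\<forall>j\<ge>length psis. y j = 0) \<longrightarrow> (\<exists>w\<in>const_space N1. L w = y)"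
    "\<forall>w\<in>const_space N1. L w = 0 \<longleftrightarrow> w \<in> const_space N2"
    "\<forall>i<n. \<forall>w\<in>const_space N1. L (diag_action phis i w) = diag_action psis i (L w)"
    by blast
  with D1 D2 have "lifted_quotient n phis psis N1 N2 L" unfolding lifted_quotient_def by blast
  then show ?thesis by blast
qed

theorem mainTheorem3:
  fixes n :: nat and phis :: "(nat \<Rightarrow> complex) list" and N1 N2 :: "lelem set"
  assumes "is_Dsub n phis N1" and "is_Dsub n phis N2" and "N2 \<subseteq> N1"
  shows "\<exists>psis :: (nat \<Rightarrow> complex) list. \<exists>f :: lelem \<Rightarrow> lelem.
           f ` N1 = lin_carrier n psis \<and>
           (\<forall>v\<in>N1. \<forall>w\<in>N1. f (lin_add v w) = lin_add (f v) (f w)) \<and>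
           (\<forall>c. \<forall>v\<in>N1. f (lin_scale c v) = lin_scale c (f v)) \<and>
           (\<forall>i<n. \<forall>v\<in>N1. f (lin_X i v) = lin_X i (f v) \<and>
                           f (lin_D phis i v) = lin_D psis i (f v)) \<and>
           (\<forall>v\<in>N1. f v = lin_zero \<longleftrightarrow> v \<in> N2)"
proof -
  obtain psis L where "lifted_quotient n phis psis N1 N2 L"
    using lifted_quotient_exists[OF assms] by blast
  then interpret Q: lifted_quotient n phis psis N1 N2 L .
  show ?thesis
    by (intro exI[of _ psis] exI[of _ "lift L"] conjI ballI allI impI)
      (simp_all add: Q.lift_image Q.lift_add Q.lift_scale Q.lift_X Q.lift_D Q.lift_kernel)
qed

end
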